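(* Let $n\ge1$, let $\vec x=x_1,\dots,x_n$ be variables, and let $\sigma$ be a symmetry of the pseudo-Boolean formula $\mathcal{C}$ with support $\{x_{i_1},\dots,x_{i_k}\}$, $i_1<\dots<i_k$. Let $\mathcal{D}$ be a formula containing the circuit constraints for $\sigma$ defined below, and let $C\doteq t_k\ge1$. Then the proof goal $\mathcal{C}\cup\mathcal{D}\cup\{\neg C\}\cup\mathcal{S}(\vec x{\upharpoonright}_\sigma,\vec x,\vec a,\vec d)\vdash\{d_n\ge1\}$ can be shown, i.e., a contradiction $0\ge1$ can be derived from $\mathcal{C}\cup\mathcal{D}\cup\{\bar t_k\ge1\}\cup\mathcal{S}(\vec x{\upharpoonright}_\sigma,\vec x,\vec a,\vec d)\cup\{\bar d_n\ge1\}$, using $O(k)$ RUP steps and cutting planes steps, where the RUP steps require $O(n)$ propagations in total.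
   Context: Literals are $x$ or $\bar x=1-x$; PB constraints $\sum_i c_i\ell_i\ge A$; $\neg(\sum c_i\ell_i\ge A)\doteq\sum c_i\bar\ell_i\ge\sum c_i-A+1$. A symmetry $\sigma$ is a permutation of literals with $\sigma(\bar\ell)=\overline{\sigma(\ell)}$ and finite support $\{x:\sigma(x)\ne x\}$, such that $\mathcal{C}{\upharpoonright}_\sigma$ equals $\mathcal{C}$ syntactically. Lexicographic-order specification $\mathcal{S}(\vec u,\vec v,\vec a,\vec d)$ over $n$ variables: $\bar a_1+u_1+\bar v_1\ge1$; $2a_1+\bar u_1+v_1\ge2$; for $1\le i\le n-2$: $3\bar a_{i+1}+2a_i+u_{i+1}+\bar v_{i+1}\ge3$, $2a_{i+1}+2\bar a_i+\bar u_{i+1}+v_{i+1}\ge2$; $\bar d_1+v_1+\bar u_1\ge1$; $2d_1+\bar v_1+u_1\ge2$; for $1\le i\le n-1$: $4\bar d_{i+1}+3d_i+\bar a_i+v_{i+1}+\bar u_{i+1}\ge4$, $4d_{i+1}+3\bar d_i+a_i+\bar v_{i+1}+u_{i+1}\ge3$. $\mathcal{S}(\vec x{\upharpoonright}_\sigma,\vec x,\vec a,\vec d)$ substitutes $u_i\mapsto\sigma(x_i)$, $v_i\mapsto x_i$; the auxiliary variables $a_i,d_i$ are fresh. Circuit constraints for $\sigma$ (fresh variables $s_1..s_{k-1}$, $t_1..t_k$, writing $p_j=x_{i_j}$, $q_j=\sigma(x_{i_j})$): $\bar s_1+p_1+\bar q_1\ge1$; $2s_1+\bar p_1+q_1\ge2$;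 for $1\le j\le k-2$: $3\bar s_{j+1}+2s_j+p_{j+1}+\bar q_{j+1}\ge3$, $2s_{j+1}+2\bar s_j+\bar p_{j+1}+q_{j+1}\ge2$; $\bar t_1+q_1+\bar p_1\ge1$; $2t_1+\bar q_1+p_1\ge2$; for $1\le j\le k-1$: $4\bar t_{j+1}+3t_j+\bar s_j+q_{j+1}+\bar p_{j+1}\ge4$, $3t_{j+1}+3\bar t_j+s_j+\bar q_{j+1}+p_{j+1}\ge3$. A cutting planes step derives a new constraint from a bounded number of available constraints and literal axioms using addition, positive multiplication, division with rounding up, saturation and weakening. A RUP step derives $D$ if unit propagation on the available constraints together with $\neg D$ reaches a conflict (unit propagation: a constraint with negative slack $\sum_{i:\rho(\ell_i)\ne0}c_i-A$ under partial assignment $\rho$ is a conflict; an unassigned literal whose coefficient exceeds the slack is set to true). *)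

theory Defs
  imports Main
begin

datatype 'v lit = Pos 'v | Neg 'v

fun neg :: "'v lit \<Rightarrow> 'v lit" where
  "neg (Pos v) = Neg v"
| "neg (Neg v) = Pos v"

text \<open>A PB constraint is stored in normalized linear form: the pair (f, A) stands for
  sum over v of f v * v \<ge> A, with variables ranging over {0,1}.  A term c * (negated v)
  is c - c * v, so every constraint over literals has such a representation.\<close>
type_synonym 'v constr = "('v \<Rightarrow> int) \<times> int"

definition vars :: "'v constr \<Rightarrow> 'v set" where
  "vars c = {v. fst c v \<noteq> 0}"

definition wf_constr :: "'v constr \<Rightarrow> bool" where
  "wf_constr c \<longleftrightarrow> finite (vars c)"

fun lc :: "'v constr \<Rightarrow> 'v lit \<Rightarrow> int" where
  "lc c (Pos v) = max (fst c v) 0"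
| "lc c (Neg v) = max (- fst c v) 0"

definition deg :: "'v constr \<Rightarrow> int" where
  "deg c = snd c + (\<Sum>v\<in>{v. fst c v < 0}. - fst c v)"

text \<open>The constraint sum over literals l of g l * l \<ge> D (g finitely supported, nonnegative).\<close>
definition of_lits :: "('v lit \<Rightarrow> int) \<Rightarrow> int \<Rightarrow> 'v constr" where
  "of_lits g D = (\<lambda>v. g (Pos v) - g (Neg v), D - (\<Sum>v\<in>{v. g (Neg v) \<noteq> 0}. g (Neg v)))"

definition pb :: "(int \<times> 'v lit) list \<Rightarrow> int \<Rightarrow> 'v constr" where
  "pb ts A = of_lits (\<lambda>l. sum_list (map (\<lambda>(c, l'). if l' = l then c else 0) ts)) A"

definition falsum :: "'v constr" where
  "falsum = ((\<lambda>_. 0), 1)"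

text \<open>Negation: not (L \<ge> A) is -L \<ge> 1 - A, i.e. sum c_i (negated l_i) \<ge> sum c_i - A + 1.\<close>
definition negc :: "'v constr \<Rightarrow> 'v constr" where
  "negc c = ((\<lambda>v. - fst c v), 1 - snd c)"

definition lit_axiom :: "'v lit \<Rightarrow> 'v constr" where
  "lit_axiom l = pb [(1, l)] 0"

definition addc :: "'v constr \<Rightarrow> 'v constr \<Rightarrow> 'v constr" where
  "addc c1 c2 = ((\<lambda>v. fst c1 v + fst c2 v), snd c1 + snd c2)"

definition multc :: "int \<Rightarrow> 'v constr \<Rightarrow> 'v constr" where
  "multc k c = ((\<lambda>v. k * fst c v), k * snd c)"

definition ceildiv :: "int \<Rightarrow> int \<Rightarrow> int" where
  "ceildiv a d = - ((- a) div d)"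

definition divc :: "int \<Rightarrow> 'v constr \<Rightarrow> 'v constr" where
  "divc d c = of_lits (\<lambda>l. ceildiv (lc c l) d) (ceildiv (deg c) d)"

definition satc :: "'v constr \<Rightarrow> 'v constr" where
  "satc c = of_lits (\<lambda>l. min (lc c l) (max (deg c) 0)) (deg c)"

definition weakc :: "'v lit \<Rightarrow> 'v constr \<Rightarrow> 'v constr" where
  "weakc l c = of_lits (\<lambda>l'. if l' = l then 0 else lc c l') (deg c - lc c l)"

inductive cp :: "'v constr set \<Rightarrow> 'v constr \<Rightarrow> nat \<Rightarrow> bool" for F where
  cp_avail: "c \<in> F \<Longrightarrow> cp F c 0"
| cp_axiom: "cp F (lit_axiom l) 0"
| cp_add: "cp F c1 m1 \<Longrightarrow> cp F c2 m2 \<Longrightarrow> cp F (addc c1 c2) (Suc (m1 + m2))"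
| cp_mult: "k > 0 \<Longrightarrow> cp F c m \<Longrightarrow> cp F (multc k c) (Suc m)"
| cp_div: "d > 0 \<Longrightarrow> cp F c m \<Longrightarrow> cp F (divc d c) (Suc m)"
| cp_sat: "cp F c m \<Longrightarrow> cp F (satc c) (Suc m)"
| cp_weak: "cp F c m \<Longrightarrow> cp F (weakc l c) (Suc m)"

type_synonym 'v assignment = "'v \<Rightarrow> bool option"

fun lval :: "'v assignment \<Rightarrow> 'v lit \<Rightarrow> bool option" where
  "lval \<rho> (Pos v) = \<rho> v"
| "lval \<rho> (Neg v) = map_option Not (\<rho> v)"

fun assign_true :: "'v assignment \<Rightarrow> 'v lit \<Rightarrow> 'v assignment" where
  "assign_true \<rho> (Pos v) = \<rho>(v := Some True)"
| "assign_true \<rho> (Neg v) = \<rho>(v := Some False)"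

definition slack :: "'v assignment \<Rightarrow> 'v constr \<Rightarrow> int" where
  "slack \<rho> c = (\<Sum>l\<in>{l. lc c l \<noteq> 0 \<and> lval \<rho> l \<noteq> Some False}. lc c l) - deg c"

definition prop_step :: "'v constr set \<Rightarrow> 'v assignment \<Rightarrow> 'v assignment \<Rightarrow> bool" where
  "prop_step F \<rho> \<rho>' \<longleftrightarrow>
     (\<exists>c\<in>F. \<exists>l. lval \<rho> l = None \<and> lc c l > slack \<rho> c \<and> \<rho>' = assign_true \<rho> l)"

definition rup :: "'v constr set \<Rightarrow> 'v constr \<Rightarrow> nat \<Rightarrow> bool" where
  "rup F c p \<longleftrightarrow>
     (\<exists>\<rho>. (prop_step (insert (negc c) F) ^^ p) (\<lambda>_. None) \<rho>
          \<and> (\<exists>c'\<in>insert (negc c) F. slack \<rho> c' < 0))"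

datatype 'v pstep =
    CPStep "'v constr" nat   \<comment> \<open>constraint, number of rule applications\<close>
  | RUPStep "'v constr" nat  \<comment> \<open>constraint, number of propagations\<close>

fun step_constr :: "'v pstep \<Rightarrow> 'v constr" where
  "step_constr (CPStep c _) = c"
| "step_constr (RUPStep c _) = c"

fun step_cost :: "'v pstep \<Rightarrow> nat" where
  "step_cost (CPStep _ m) = Suc m"
| "step_cost (RUPStep _ _) = 1"

fun step_props :: "'v pstep \<Rightarrow> nat" where
  "step_props (CPStep _ _) = 0"
| "step_props (RUPStep _ p) = p"

fun valid_from :: "'v constr set \<Rightarrow> 'v pstep list \<Rightarrow> bool" where
  "valid_from F [] = True"
| "valid_from F (CPStep c m # st) = (cp F c m \<and> valid_from (insert c F) st)"
| "valid_from F (RUPStep c p # st) = (rup F c p \<and> valid_from (insert c F) st)"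

definition refutes :: "'v constr set \<Rightarrow> 'v pstep list \<Rightarrow> bool" where
  "refutes F st \<longleftrightarrow> valid_from F st \<and> falsum \<in> set (map step_constr st)"

definition supp :: "('v lit \<Rightarrow> 'v lit) \<Rightarrow> 'v set" where
  "supp \<sigma> = {v. \<sigma> (Pos v) \<noteq> Pos v}"

text \<open>C restricted by \<sigma>: every literal l is replaced by \<sigma> l.\<close>
definition subst :: "('v lit \<Rightarrow> 'v lit) \<Rightarrow> 'v constr \<Rightarrow> 'v constr" where
  "subst \<sigma> c = of_lits (\<lambda>l. lc c (inv \<sigma> l)) (deg c)"

definition is_symmetry :: "('v lit \<Rightarrow> 'v lit) \<Rightarrow> 'v constr set \<Rightarrow> bool" where
  "is_symmetry \<sigma> C \<longleftrightarrow> bij \<sigma> \<and> (\<forall>l. \<sigma> (neg l) = neg (\<sigma> l)) \<and> finite (supp \<sigma>)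
     \<and> subst \<sigma> ` C = C"

definition lexspec :: "nat \<Rightarrow> (nat \<Rightarrow> 'v lit) \<Rightarrow> (nat \<Rightarrow> 'v lit) \<Rightarrow> (nat \<Rightarrow> 'v) \<Rightarrow> (nat \<Rightarrow> 'v)
    \<Rightarrow> 'v constr set" where
  "lexspec n u v a d =
     {pb [(1, Neg (a 1)), (1, u 1), (1, neg (v 1))] 1,
      pb [(2, Pos (a 1)), (1, neg (u 1)), (1, v 1)] 2}
   \<union> (\<Union>i\<in>{1..n-2}.
       {pb [(3, Neg (a (i+1))), (2, Pos (a i)), (1, u (i+1)), (1, neg (v (i+1)))] 3,
        pb [(2, Pos (a (i+1))), (2, Neg (a i)), (1, neg (u (i+1))), (1, v (i+1))] 2})
   \<union> {pb [(1, Neg (d 1)), (1, v 1), (1, neg (u 1))] 1,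
      pb [(2, Pos (d 1)), (1, neg (v 1)), (1, u 1)] 2}
   \<union> (\<Union>i\<in>{1..n-1}.
       {pb [(4, Neg (d (i+1))), (3, Pos (d i)), (1, Neg (a i)), (1, v (i+1)), (1, neg (u (i+1)))] 4,
        pb [(4, Pos (d (i+1))), (3, Neg (d i)), (1, Pos (a i)), (1, neg (v (i+1))), (1, u (i+1))] 3})"

definition circuit :: "nat \<Rightarrow> (nat \<Rightarrow> 'v lit) \<Rightarrow> (nat \<Rightarrow> 'v lit) \<Rightarrow> (nat \<Rightarrow> 'v) \<Rightarrow> (nat \<Rightarrow> 'v)
    \<Rightarrow> 'v constr set" where
  "circuit k p q s t =
     {pb [(1, Neg (s 1)), (1, p 1), (1, neg (q 1))] 1,
      pb [(2, Pos (s 1)), (1, neg (p 1)), (1, q 1)] 2}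
   \<union> (\<Union>j\<in>{1..k-2}.
       {pb [(3, Neg (s (j+1))), (2, Pos (s j)), (1, p (j+1)), (1, neg (q (j+1)))] 3,
        pb [(2, Pos (s (j+1))), (2, Neg (s j)), (1, neg (p (j+1))), (1, q (j+1))] 2})
   \<union> {pb [(1, Neg (t 1)), (1, q 1), (1, neg (p 1))] 1,
      pb [(2, Pos (t 1)), (1, neg (q 1)), (1, p 1)] 2}
   \<union> (\<Union>j\<in>{1..k-1}.
       {pb [(4, Neg (t (j+1))), (3, Pos (t j)), (1, Neg (s j)), (1, q (j+1)), (1, neg (p (j+1)))] 4,
        pb [(3, Pos (t (j+1))), (3, Neg (t j)), (1, Pos (s j)), (1, neg (q (j+1))), (1, p (j+1))] 3})"

datatype var = X nat | AuxA nat | AuxD nat | AuxS nat | AuxT nat | Other nat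

end

theory Submission
  imports Defs
begin

text \<open>Intended meaning of the auxiliary variables: a_l and d_l say that \<sigma>(x) \<ge> x componentwise
  and x \<ge>lex \<sigma>(x) on x_1, ..., x_l; s_j and t_j say that x \<ge> \<sigma>(x) componentwise and
  \<sigma>(x) \<ge>lex x on the support variables x_(i_1), ..., x_(i_j).  By induction on j we derive by
  RUP the clauses t_j \<or> d_(i_j), \<not>s_j \<or> d_(i_j) and \<not>a_(i_j) \<or> t_j, with
  \<not>t_j \<or> t_(j+1) \<or> d_(i_(j+1)) as a stepping stone.  Each check propagates along the a- and
  d-chains through the positions strictly between i_j and i_(j+1), which \<sigma> fixes, so step j
  needs O(i_(j+1) - i_j) propagations and all steps together O(n).  Finally t_k \<or> d_(i_k),
  the units \<not>t_k and \<not>d_n and the d-chain through the fixed positions after i_k conflict.\<close>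

section \<open>Semantics of constraints\<close>

fun sat :: "('v \<Rightarrow> bool) \<Rightarrow> 'v lit \<Rightarrow> bool" where
  "sat \<tau> (Pos v) = \<tau> v"
| "sat \<tau> (Neg v) = (\<not> \<tau> v)"

lemma sat_neg [simp]: "sat \<tau> (neg l) \<longleftrightarrow> \<not> sat \<tau> l"
  by (cases l) auto

definition val :: "('v \<Rightarrow> bool) \<Rightarrow> 'v constr \<Rightarrow> int" where
  "val \<tau> c = (\<Sum>v\<in>vars c. fst c v * of_bool (\<tau> v))"

definition holds :: "('v \<Rightarrow> bool) \<Rightarrow> 'v constr \<Rightarrow> bool" where
  "holds \<tau> c \<longleftrightarrow> snd c \<le> val \<tau> c"

definition extends :: "('v \<Rightarrow> bool) \<Rightarrow> 'v assignment \<Rightarrow> bool" where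
  "extends \<tau> \<rho> \<longleftrightarrow> (\<forall>v b. \<rho> v = Some b \<longrightarrow> \<tau> v = b)"

lemma extends_lval: "extends \<tau> \<rho> \<Longrightarrow> lval \<rho> l = Some b \<Longrightarrow> sat \<tau> l = b"
  by (cases l) (auto simp: extends_def)

lemma extends_assign_true:
  assumes "lval \<rho> l = None" "extends \<tau> (assign_true \<rho> l)"
  shows "extends \<tau> \<rho>" and "sat \<tau> l"
proof -
  obtain v b where v: "assign_true \<rho> l = \<rho>(v := Some b)" "\<rho> v = None" "sat \<tau> l \<longleftrightarrow> \<tau> v = b"
    using assms(1) by (cases l) auto
  with assms(2) show "extends \<tau> \<rho>" and "sat \<tau> l"
    unfolding extends_def by (metis fun_upd_other fun_upd_same option.distinct(1))+
qed

lemma val_fun_upd: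
  assumes "wf_constr c"
  shows "val (\<tau>(v := b)) c = val \<tau> c + fst c v * (of_bool b - of_bool (\<tau> v))"
proof -
  have "val (\<tau>(v := b)) c - val \<tau> c
      = (\<Sum>w\<in>vars c. if w = v then fst c v * (of_bool b - of_bool (\<tau> v)) else 0)"
    unfolding val_def sum_subtractf[symmetric] by (rule sum.cong) (auto simp: algebra_simps)
  also have "\<dots> = fst c v * (of_bool b - of_bool (\<tau> v))"
    using assms by (simp add: wf_constr_def vars_def)
  finally show ?thesis by simp
qed

definition best_extension :: "'v assignment \<Rightarrow> 'v constr \<Rightarrow> 'v \<Rightarrow> bool" where
  "best_extension \<rho> c v = (case \<rho> v of Some b \<Rightarrow> b | None \<Rightarrow> 0 < fst c v)"

lemma extends_best_extension: "extends (best_extension \<rho> c) \<rho>"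
  by (auto simp: extends_def best_extension_def)

lemma slack_eq_best_extension:
  assumes "wf_constr c"
  shows "slack \<rho> c = val (best_extension \<rho> c) c - snd c"
proof -
  define V where "V = vars c"
  have fin: "finite V" using assms by (simp add: wf_constr_def V_def)
  define h where "h l = (if lval \<rho> l \<noteq> Some False then lc c l else 0)" for l
  have "{l. lc c l \<noteq> 0 \<and> lval \<rho> l \<noteq> Some False} \<subseteq> Pos ` V \<union> Neg ` V"
  proof
    fix l assume "l \<in> {l. lc c l \<noteq> 0 \<and> lval \<rho> l \<noteq> Some False}"
    then show "l \<in> Pos ` V \<union> Neg ` V"
      by (cases l) (auto simp: V_def vars_def split: if_splits)
  qed
  then have "(\<Sum>l | lc c l \<noteq> 0 \<and> lval \<rho> l \<noteq> Some False. lc c l) = (\<Sum>l\<in>Pos ` V \<union> Neg ` V. h l)"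
    by (intro sum.mono_neutral_cong_left) (auto simp: fin h_def)
  also have "\<dots> = (\<Sum>v\<in>V. h (Pos v)) + (\<Sum>v\<in>V. h (Neg v))"
    by (subst sum.union_disjoint) (auto simp: fin sum.reindex inj_on_def)
  finally have pos_part: "(\<Sum>l | lc c l \<noteq> 0 \<and> lval \<rho> l \<noteq> Some False. lc c l)
      = (\<Sum>v\<in>V. h (Pos v)) + (\<Sum>v\<in>V. h (Neg v))" .
  have "(\<Sum>v | fst c v < 0. - fst c v) = (\<Sum>v\<in>V. max (- fst c v) 0)"
    by (rule sum.mono_neutral_cong_left[OF fin]) (auto simp: V_def vars_def)
  then have deg: "deg c = snd c + (\<Sum>v\<in>V. max (- fst c v) 0)"
    by (simp add: deg_def)
  have per_var: "h (Pos v) + h (Neg v) - max (- fst c v) 0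
      = fst c v * of_bool (best_extension \<rho> c v)" for v
    by (cases "\<rho> v") (auto simp: h_def best_extension_def)
  have "slack \<rho> c = (\<Sum>v\<in>V. h (Pos v) + h (Neg v) - max (- fst c v) 0) - snd c"
    unfolding slack_def pos_part deg by (simp add: sum.distrib sum_subtractf)
  also have "\<dots> = val (best_extension \<rho> c) c - snd c"
    unfolding per_var by (simp add: val_def V_def)
  finally show ?thesis .
qed

lemma slack_negative_if_falsified:
  assumes "wf_constr c" and "\<And>\<tau>. extends \<tau> \<rho> \<Longrightarrow> \<not> holds \<tau> c"
  shows "slack \<rho> c < 0"
  using assms(2)[OF extends_best_extension[of \<rho> c]]
  by (simp add: slack_eq_best_extension[OF assms(1)] holds_def)

lemma slack_less_coeff_if_forced:
  assumes wf: "wf_constr c" and unassigned: "lval \<rho> l = None"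
    and forced: "\<And>\<tau>. extends \<tau> \<rho> \<Longrightarrow> \<not> sat \<tau> l \<Longrightarrow> \<not> holds \<tau> c"
  shows "slack \<rho> c < lc c l"
proof -
  obtain v where v: "l = Pos v \<or> l = Neg v" by (cases l) auto
  let ?\<tau> = "(best_extension \<rho> c)(v := (l = Neg v))"
  have "\<rho> v = None" using unassigned v by auto
  then have "extends ?\<tau> \<rho>" using extends_best_extension[of \<rho> c] by (auto simp: extends_def)
  moreover have "\<not> sat ?\<tau> l" using v by auto
  ultimately have "\<not> holds ?\<tau> c" by (rule forced)
  moreover have "best_extension \<rho> c v \<longleftrightarrow> 0 < fst c v"
    using \<open>\<rho> v = None\<close> by (simp add: best_extension_def)
  ultimately show ?thesis
    using v by (cases "0 < fst c v")
      (auto simp: holds_def val_fun_upd[OF wf] slack_eq_best_extension[OF wf])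
qed

section \<open>Refutation by unit propagation\<close>

definition conflict_within :: "'v constr set \<Rightarrow> 'v assignment \<Rightarrow> nat \<Rightarrow> bool" where
  "conflict_within G \<rho> B \<longleftrightarrow>
     (\<exists>\<rho>' q. (prop_step G ^^ q) \<rho> \<rho>' \<and> q \<le> B \<and> (\<exists>c\<in>G. slack \<rho>' c < 0))"

text \<open>This reduces a propagation trace to semantic side conditions: a literal is propagated by c
  as soon as every extension of the current assignment falsifying the literal falsifies c.\<close>

definition refuted_within :: "'v constr set \<Rightarrow> (('v \<Rightarrow> bool) \<Rightarrow> bool) \<Rightarrow> nat \<Rightarrow> bool" where
  "refuted_within G P B \<longleftrightarrow> (\<forall>\<rho>. (\<forall>\<tau>. extends \<tau> \<rho> \<longrightarrow> P \<tau>) \<longrightarrow> conflict_within G \<rho> B)"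

lemma conflict_within_mono: "conflict_within G \<rho> B \<Longrightarrow> B \<le> B' \<Longrightarrow> conflict_within G \<rho> B'"
  unfolding conflict_within_def by (meson order_trans)

lemma conflict_within_slack: "c \<in> G \<Longrightarrow> slack \<rho> c < 0 \<Longrightarrow> conflict_within G \<rho> B"
  unfolding conflict_within_def by (metis relpowp_0_I zero_le)

lemma refuted_within_mono:
  "refuted_within G Q B \<Longrightarrow> (\<And>\<tau>. P \<tau> \<Longrightarrow> Q \<tau>) \<Longrightarrow> B \<le> B' \<Longrightarrow> refuted_within G P B'"
  unfolding refuted_within_def by (meson conflict_within_mono)

lemma refuted_within_conflict:
  assumes "c \<in> G" "wf_constr c" and "\<And>\<tau>. P \<tau> \<Longrightarrow> \<not> holds \<tau> c"
  shows "refuted_within G P B"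
  unfolding refuted_within_def
  using assms slack_negative_if_falsified conflict_within_slack by metis

lemma refuted_within_False: "refuted_within G (\<lambda>_. False) B"
  unfolding refuted_within_def using extends_best_extension by blast

lemma refuted_within_propagate:
  assumes c: "c \<in> G" "wf_constr c"
    and forced: "\<And>\<tau>. P \<tau> \<Longrightarrow> \<not> sat \<tau> l \<Longrightarrow> \<not> holds \<tau> c"
    and rest: "refuted_within G (\<lambda>\<tau>. P \<tau> \<and> sat \<tau> l) B"
  shows "refuted_within G P (Suc B)"
  unfolding refuted_within_def
proof (intro allI impI)
  fix \<rho> assume P: "\<forall>\<tau>. extends \<tau> \<rho> \<longrightarrow> P \<tau>"
  show "conflict_within G \<rho> (Suc B)"
  proof (cases "lval \<rho> l")
    case None
    then have "slack \<rho> c < lc c l"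
      using slack_less_coeff_if_forced c forced P by blast
    with c None have "prop_step G \<rho> (assign_true \<rho> l)"
      unfolding prop_step_def by blast
    moreover have "conflict_within G (assign_true \<rho> l) B"
      using rest P extends_assign_true[OF None] unfolding refuted_within_def by blast
    ultimately show ?thesis
      unfolding conflict_within_def by (meson Suc_le_mono relpowp_Suc_I2)
  next
    case (Some b)
    show ?thesis
    proof (cases b)
      case True
      with P Some have "\<forall>\<tau>. extends \<tau> \<rho> \<longrightarrow> P \<tau> \<and> sat \<tau> l"
        using extends_lval by blast
      with rest have "conflict_within G \<rho> B"
        unfolding refuted_within_def by blast
      then show ?thesis by (rule conflict_within_mono) simp
    next
      case False
      with P Some have "\<And>\<tau>. extends \<tau> \<rho> \<Longrightarrow> \<not> holds \<tau> c"
        using extends_lval forced by blast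
      with c have "slack \<rho> c < 0"
        using slack_negative_if_falsified by blast
      with c show ?thesis by (blast intro: conflict_within_slack)
    qed
  qed
qed

fun propagates :: "'v constr set \<Rightarrow> (('v \<Rightarrow> bool) \<Rightarrow> bool) \<Rightarrow> ('v constr \<times> 'v lit) list \<Rightarrow> bool"
where
  "propagates G P [] \<longleftrightarrow> True"
| "propagates G P ((c, l) # cls) \<longleftrightarrow>
     c \<in> G \<and> wf_constr c \<and> (\<forall>\<tau>. P \<tau> \<longrightarrow> \<not> sat \<tau> l \<longrightarrow> \<not> holds \<tau> c)
     \<and> propagates G (\<lambda>\<tau>. P \<tau> \<and> sat \<tau> l) cls"

lemma refuted_within_propagates:
  assumes "refuted_within G Q B" and "propagates G P cls"
    and "\<And>\<tau>. P \<tau> \<Longrightarrow> (\<forall>(c, l)\<in>set cls. sat \<tau> l) \<Longrightarrow> Q \<tau>"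
    and "length cls + B \<le> B'"
  shows "refuted_within G P B'"
  using assms(2-4)
proof (induction cls arbitrary: P B')
  case Nil
  then show ?case using assms(1) by (auto elim: refuted_within_mono)
next
  case (Cons cl cls)
  obtain c l where cl: "cl = (c, l)" by (cases cl)
  have "refuted_within G (\<lambda>\<tau>. P \<tau> \<and> sat \<tau> l) (length cls + B)"
    using Cons by (intro Cons.IH) (auto simp: cl)
  then have "refuted_within G P (Suc (length cls + B))"
    using Cons.prems(1) by (intro refuted_within_propagate) (auto simp: cl)
  then show ?case
    by (rule refuted_within_mono) (use Cons.prems(3) in simp_all)
qed

lemma rup_if_refuted_within:
  assumes "refuted_within (insert (negc c) G) (\<lambda>_. True) B" and "B \<le> N"
  shows "\<exists>p\<le>N. rup G c p"
  using assms(1)[unfolded refuted_within_def, rule_format, of "\<lambda>_. None"] assms(2)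
  unfolding conflict_within_def rup_def by (meson order_trans)

lemma sum_pb_coeffs:
  assumes "finite S" "snd ` set ts \<subseteq> S"
  shows "(\<Sum>l\<in>S. sum_list (map (\<lambda>(c, l'). if l' = l then c else 0) ts) * (h l :: int))
         = (\<Sum>(c, l)\<leftarrow>ts. c * h l)"
  using assms(2)
proof (induction ts)
  case (Cons cl ts)
  obtain c0 l0 where cl: "cl = (c0, l0)" by (cases cl)
  have "(\<Sum>l\<in>S. sum_list (map (\<lambda>(c, l'). if l' = l then c else 0) (cl # ts)) * h l)
      = (\<Sum>l\<in>S. if l0 = l then c0 * h l else 0)
        + (\<Sum>l\<in>S. sum_list (map (\<lambda>(c, l'). if l' = l then c else 0) ts) * h l)"
    by (simp add: cl sum.distrib[symmetric] distrib_right) (rule sum.cong, auto)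
  with Cons assms(1) cl show ?case by simp
qed simp

lemma
  assumes fin: "finite S" and supp: "\<And>l. g l \<noteq> 0 \<Longrightarrow> l \<in> S"
  shows finite_vars_of_lits: "finite (vars (of_lits g D))"
    and holds_of_lits: "holds \<tau> (of_lits g D) \<longleftrightarrow> D \<le> (\<Sum>l\<in>S. g l * of_bool (sat \<tau> l))"
proof -
  define V where "V = {v. Pos v \<in> S} \<union> {v. Neg v \<in> S}"
  have finV: "finite V"
    using finite_vimageI[OF fin, of Pos] finite_vimageI[OF fin, of Neg]
    by (auto simp: V_def vimage_def inj_on_def)
  have vars: "vars (of_lits g D) \<subseteq> V"
    by (auto simp: vars_def of_lits_def V_def) (metis eq_iff_diff_eq_0 supp)
  then show "finite (vars (of_lits g D))" using finV by (rule finite_subset)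
  have val: "val \<tau> (of_lits g D) = (\<Sum>v\<in>V. (g (Pos v) - g (Neg v)) * of_bool (\<tau> v))"
    unfolding val_def
    by (rule sum.mono_neutral_cong_left[OF finV vars]) (auto simp: vars_def of_lits_def)
  have degree: "snd (of_lits g D) = D - (\<Sum>v\<in>V. g (Neg v))"
    unfolding of_lits_def using supp
    by (simp, intro sum.mono_neutral_cong_left[OF finV]) (auto simp: V_def)
  have "S \<subseteq> Pos ` V \<union> Neg ` V"
  proof
    fix l assume "l \<in> S" then show "l \<in> Pos ` V \<union> Neg ` V" by (cases l) (auto simp: V_def)
  qed
  then have "(\<Sum>l\<in>S. g l * of_bool (sat \<tau> l)) = (\<Sum>l\<in>Pos ` V \<union> Neg ` V. g l * of_bool (sat \<tau> l))"
    using finV supp by (intro sum.mono_neutral_left) auto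
  also have "\<dots> = (\<Sum>l\<in>Pos ` V. g l * of_bool (sat \<tau> l)) + (\<Sum>l\<in>Neg ` V. g l * of_bool (sat \<tau> l))"
    by (rule sum.union_disjoint) (auto simp: finV)
  also have "\<dots> = (\<Sum>v\<in>V. g (Pos v) * of_bool (\<tau> v)) + (\<Sum>v\<in>V. g (Neg v) * of_bool (\<not> \<tau> v))"
    by (simp add: sum.reindex inj_on_def)
  finally have lits: "(\<Sum>l\<in>S. g l * of_bool (sat \<tau> l))
      = (\<Sum>v\<in>V. g (Pos v) * of_bool (\<tau> v)) + (\<Sum>v\<in>V. g (Neg v) * of_bool (\<not> \<tau> v))" .
  have "(\<Sum>v\<in>V. (g (Pos v) - g (Neg v)) * of_bool (\<tau> v)) + (\<Sum>v\<in>V. g (Neg v))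
      = (\<Sum>v\<in>V. g (Pos v) * of_bool (\<tau> v)) + (\<Sum>v\<in>V. g (Neg v) * of_bool (\<not> \<tau> v))"
    by (simp add: sum.distrib[symmetric]) (rule sum.cong; simp add: algebra_simps)
  with lits show "holds \<tau> (of_lits g D) \<longleftrightarrow> D \<le> (\<Sum>l\<in>S. g l * of_bool (sat \<tau> l))"
    unfolding holds_def val degree by linarith
qed

lemma pb_coeff_nonzero:
  "sum_list (map (\<lambda>(c, l'). if l' = l then c else 0) ts) \<noteq> 0 \<Longrightarrow> l \<in> snd ` set ts"
  by (induction ts) (auto split: if_splits)

lemma wf_pb [simp]: "wf_constr (pb ts A)"
  unfolding pb_def wf_constr_def
  by (rule finite_vars_of_lits[of "snd ` set ts"]) (auto intro: pb_coeff_nonzero)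

lemma holds_pb: "holds \<tau> (pb ts A) \<longleftrightarrow> A \<le> (\<Sum>(c, l)\<leftarrow>ts. c * of_bool (sat \<tau> l))"
proof -
  have "holds \<tau> (pb ts A) \<longleftrightarrow> A \<le> (\<Sum>l\<in>snd ` set ts.
      sum_list (map (\<lambda>(c, l'). if l' = l then c else 0) ts) * of_bool (sat \<tau> l))"
    unfolding pb_def by (rule holds_of_lits) (auto intro: pb_coeff_nonzero)
  then show ?thesis by (simp only: sum_pb_coeffs[OF finite_imageI[OF finite_set] order_refl])
qed

lemma wf_negc [simp]: "wf_constr (negc c) \<longleftrightarrow> wf_constr c"
  by (simp add: wf_constr_def vars_def negc_def)

lemma holds_negc [simp]: "holds \<tau> (negc c) \<longleftrightarrow> \<not> holds \<tau> c"
proof -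
  have "val \<tau> (negc c) = - val \<tau> c"
    by (simp add: val_def vars_def negc_def sum_negf)
  then show ?thesis by (simp add: holds_def negc_def) arith
qed

definition clause :: "'v lit list \<Rightarrow> 'v constr" where
  "clause ls = pb (map (\<lambda>l. (1, l)) ls) 1"

lemma wf_clause [simp]: "wf_constr (clause ls)"
  by (simp add: clause_def)

lemma holds_clause [simp]: "holds \<tau> (clause ls) \<longleftrightarrow> (\<exists>l\<in>set ls. sat \<tau> l)"
proof -
  have sum: "(\<Sum>(c, l)\<leftarrow>map (\<lambda>l. (1, l)) ls. c * of_bool (sat \<tau> l))
      = (\<Sum>l\<leftarrow>ls. of_bool (sat \<tau> l) :: int)"
    by (induction ls) auto
  have nonneg: "0 \<le> (\<Sum>l\<leftarrow>ls'. of_bool (sat \<tau> l) :: int)" for ls'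
    by (induction ls') auto
  have "1 \<le> (\<Sum>l\<leftarrow>ls. of_bool (sat \<tau> l) :: int) \<longleftrightarrow> (\<exists>l\<in>set ls. sat \<tau> l)"
    by (induction ls) (use nonneg in auto)
  with sum show ?thesis by (simp add: clause_def holds_pb)
qed

section \<open>The lexicographic order and circuit constraints\<close>

text \<open>Index 0 selects the first constraint of each chain, so that the characterisations below
  read as the step constraints with a_0, d_0, s_0 and t_0 true.\<close>

definition lex_a :: "(nat \<Rightarrow> 'v lit) \<Rightarrow> (nat \<Rightarrow> 'v lit) \<Rightarrow> (nat \<Rightarrow> 'v) \<Rightarrow> nat \<Rightarrow> 'v constr" where
  "lex_a u v a l =
     (if l = 0 then pb [(1, Neg (a 1)), (1, u 1), (1, neg (v 1))] 1
      else pb [(3, Neg (a (l+1))), (2, Pos (a l)), (1, u (l+1)), (1, neg (v (l+1)))] 3)"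

definition lex_d :: "(nat \<Rightarrow> 'v lit) \<Rightarrow> (nat \<Rightarrow> 'v lit) \<Rightarrow> (nat \<Rightarrow> 'v) \<Rightarrow> (nat \<Rightarrow> 'v) \<Rightarrow> nat
    \<Rightarrow> 'v constr" where
  "lex_d u v a d l =
     (if l = 0 then pb [(2, Pos (d 1)), (1, neg (v 1)), (1, u 1)] 2
      else pb [(4, Pos (d (l+1))), (3, Neg (d l)), (1, Pos (a l)), (1, neg (v (l+1))), (1, u (l+1))] 3)"

definition circuit_t :: "(nat \<Rightarrow> 'v lit) \<Rightarrow> (nat \<Rightarrow> 'v lit) \<Rightarrow> (nat \<Rightarrow> 'v) \<Rightarrow> (nat \<Rightarrow> 'v) \<Rightarrow> nat
    \<Rightarrow> 'v constr" where
  "circuit_t p q s t j =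
     (if j = 0 then pb [(2, Pos (t 1)), (1, neg (q 1)), (1, p 1)] 2
      else pb [(3, Pos (t (j+1))), (3, Neg (t j)), (1, Pos (s j)), (1, neg (q (j+1))), (1, p (j+1))] 3)"

lemma wf_lex_a [simp]: "wf_constr (lex_a u v a l)"
  and wf_lex_d [simp]: "wf_constr (lex_d u v a d l)"
  and wf_circuit_t [simp]: "wf_constr (circuit_t p q s t j)"
  by (simp_all add: lex_a_def lex_d_def circuit_t_def)

lemma holds_lex_a [simp]:
  "holds \<tau> (lex_a u v a l) \<longleftrightarrow>
     \<not> \<tau> (a (Suc l)) \<or> ((l = 0 \<or> \<tau> (a l)) \<and> (sat \<tau> (u (Suc l)) \<or> \<not> sat \<tau> (v (Suc l))))"
  by (cases "l = 0") (auto simp: lex_a_def holds_pb)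

lemma holds_lex_d [simp]:
  "holds \<tau> (lex_d u v a d l) \<longleftrightarrow>
     \<tau> (d (Suc l)) \<or> (0 < l \<and> \<not> \<tau> (d l))
     \<or> ((l = 0 \<or> \<tau> (a l)) \<and> \<not> sat \<tau> (v (Suc l)) \<and> sat \<tau> (u (Suc l)))"
  by (cases "l = 0") (auto simp: lex_d_def holds_pb)

lemma holds_circuit_t [simp]:
  "holds \<tau> (circuit_t p q s t j) \<longleftrightarrow>
     \<tau> (t (Suc j)) \<or> (0 < j \<and> \<not> \<tau> (t j))
     \<or> ((j = 0 \<or> \<tau> (s j)) \<and> \<not> sat \<tau> (q (Suc j)) \<and> sat \<tau> (p (Suc j)))"
  by (cases "j = 0") (auto simp: circuit_t_def holds_pb)

lemma lex_a_in_lexspec: "l + 2 \<le> n \<Longrightarrow> lex_a u v a l \<in> lexspec n u v a d"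
  by (cases "l = 0") (auto simp: lex_a_def lexspec_def)

lemma lex_d_in_lexspec: "l < n \<Longrightarrow> lex_d u v a d l \<in> lexspec n u v a d"
  by (cases "l = 0") (auto simp: lex_d_def lexspec_def)

lemma lex_a_in_circuit: "j + 2 \<le> k \<Longrightarrow> lex_a p q s j \<in> circuit k p q s t"
  by (cases "j = 0") (auto simp: lex_a_def circuit_def)

lemma circuit_t_in_circuit: "j < k \<Longrightarrow> circuit_t p q s t j \<in> circuit k p q s t"
  by (cases "j = 0") (auto simp: circuit_t_def circuit_def)

section \<open>Deriving the invariant clauses\<close>

definition t_or_d_clause :: "(nat \<Rightarrow> nat) \<Rightarrow> nat \<Rightarrow> var constr" where
  "t_or_d_clause i j = clause [Pos (AuxT j), Pos (AuxD (i j))]"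

definition s_imp_d_clause :: "(nat \<Rightarrow> nat) \<Rightarrow> nat \<Rightarrow> var constr" where
  "s_imp_d_clause i j = clause [Neg (AuxS j), Pos (AuxD (i j))]"

definition a_imp_t_clause :: "(nat \<Rightarrow> nat) \<Rightarrow> nat \<Rightarrow> var constr" where
  "a_imp_t_clause i j = clause [Neg (AuxA (i j)), Pos (AuxT j)]"

definition t_step_clause :: "(nat \<Rightarrow> nat) \<Rightarrow> nat \<Rightarrow> var constr" where
  "t_step_clause i j = clause [Neg (AuxT j), Pos (AuxT (Suc j)), Pos (AuxD (i (Suc j)))]"

lemmas invariant_clause_defs =
  t_or_d_clause_def s_imp_d_clause_def a_imp_t_clause_def t_step_clause_def

definition derived :: "'v constr set \<Rightarrow> 'v pstep list \<Rightarrow> 'v constr set" where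
  "derived F st = F \<union> set (map step_constr st)"

lemma valid_from_append:
  "valid_from F (st @ st') \<longleftrightarrow> valid_from F st \<and> valid_from (derived F st) st'"
proof (induction st arbitrary: F)
  case (Cons s st)
  then show ?case by (cases s) (simp_all add: derived_def)
qed (simp add: derived_def)

locale lex_circuit =
  fixes n k :: nat and i :: "nat \<Rightarrow> nat" and \<sigma> :: "var lit \<Rightarrow> var lit" and F :: "var constr set"
  assumes k_pos: "1 \<le> k"
    and i_strict_mono: "strict_mono_on {1..k} i"
    and i_range: "i ` {1..k} \<subseteq> {1..n}"
    and \<sigma>_fixes: "\<And>l. l \<notin> i ` {1..k} \<Longrightarrow> \<sigma> (Pos (X l)) = Pos (X l)"
    and lexspec_subset: "lexspec n (\<lambda>l. \<sigma> (Pos (X l))) (\<lambda>l. Pos (X l)) AuxA AuxD \<subseteq> F"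
    and circuit_subset: "circuit k (\<lambda>j. Pos (X (i j))) (\<lambda>j. \<sigma> (Pos (X (i j)))) AuxS AuxT \<subseteq> F"
begin

abbreviation "a_step \<equiv> lex_a (\<lambda>l. \<sigma> (Pos (X l))) (\<lambda>l. Pos (X l)) AuxA"
abbreviation "d_step \<equiv> lex_d (\<lambda>l. \<sigma> (Pos (X l))) (\<lambda>l. Pos (X l)) AuxA AuxD"
abbreviation "s_step \<equiv> lex_a (\<lambda>j. Pos (X (i j))) (\<lambda>j. \<sigma> (Pos (X (i j)))) AuxS"
abbreviation "t_step \<equiv> circuit_t (\<lambda>j. Pos (X (i j))) (\<lambda>j. \<sigma> (Pos (X (i j)))) AuxS AuxT"

lemma a_step_in: "F \<subseteq> G \<Longrightarrow> l + 2 \<le> n \<Longrightarrow> a_step l \<in> G"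
  using lex_a_in_lexspec lexspec_subset by blast

lemma d_step_in: "F \<subseteq> G \<Longrightarrow> l < n \<Longrightarrow> d_step l \<in> G"
  using lex_d_in_lexspec lexspec_subset by blast

lemma s_step_in: "F \<subseteq> G \<Longrightarrow> j + 2 \<le> k \<Longrightarrow> s_step j \<in> G"
  using lex_a_in_circuit circuit_subset by blast

lemma t_step_in: "F \<subseteq> G \<Longrightarrow> j < k \<Longrightarrow> t_step j \<in> G"
  using circuit_t_in_circuit circuit_subset by blast

lemma i_less_iff: "a \<in> {1..k} \<Longrightarrow> b \<in> {1..k} \<Longrightarrow> i a < i b \<longleftrightarrow> a < b"
  using strict_mono_on_less[OF i_strict_mono] by blast

lemma i_bounds: "1 \<le> j \<Longrightarrow> j \<le> k \<Longrightarrow> 1 \<le> i j \<and> i j \<le> n"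
  using i_range by force

lemma consecutive_support:
  assumes "1 \<le> j" "j < k"
  shows "1 \<le> i j" "i j < i (Suc j)" "i (Suc j) \<le> n"
  using assms i_bounds i_less_iff by auto

lemma k_le_n: "k \<le> n"
proof -
  have "k = card (i ` {1..k})"
    using strict_mono_on_imp_inj_on[OF i_strict_mono] by (simp add: card_image)
  also have "\<dots> \<le> card {1..n}"
    using i_range by (intro card_mono) auto
  finally show ?thesis by simp
qed

lemma \<sigma>_fixes_between:
  assumes "1 \<le> j" "j < k" "i j < l" "l < i (Suc j)"
  shows "\<sigma> (Pos (X l)) = Pos (X l)"
proof (intro \<sigma>_fixes notI)
  assume "l \<in> i ` {1..k}"
  then obtain j' where "j' \<in> {1..k}" "l = i j'" by blast
  with assms have "j < j'" "j' < Suc j" using i_less_iff by auto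
  then show False by simp
qed

lemma \<sigma>_fixes_below: "l < i 1 \<Longrightarrow> \<sigma> (Pos (X l)) = Pos (X l)"
  using i_less_iff k_pos by (intro \<sigma>_fixes) fastforce

lemma \<sigma>_fixes_above: "i k < l \<Longrightarrow> \<sigma> (Pos (X l)) = Pos (X l)"
  using i_less_iff k_pos by (intro \<sigma>_fixes) fastforce

lemma d_chain:
  assumes "refuted_within G Q B" and FG: "F \<subseteq> G" and "a \<le> b" "b \<le> n"
    and "\<And>l. a < l \<Longrightarrow> l \<le> b \<Longrightarrow> \<sigma> (Pos (X l)) = Pos (X l)"
    and "\<And>\<tau>. P \<tau> \<Longrightarrow> a = 0 \<or> \<tau> (AuxD a)"
    and "\<And>\<tau>. P \<tau> \<Longrightarrow> b = 0 \<or> \<tau> (AuxD b) \<Longrightarrow> Q \<tau>"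
    and "b - a + B \<le> B'"
  shows "refuted_within G P B'"
  using \<open>a \<le> b\<close> assms(1,4-)
proof (induction b arbitrary: Q B rule: dec_induct)
  case base
  then show ?case by (auto elim: refuted_within_mono)
next
  case (step b)
  have "refuted_within G (\<lambda>\<tau>. P \<tau> \<and> (b = 0 \<or> \<tau> (AuxD b))) (Suc B)"
  proof (rule refuted_within_propagates[OF step.prems(1), where cls = "[(d_step b, Pos (AuxD (Suc b)))]"])
    show "propagates G (\<lambda>\<tau>. P \<tau> \<and> (b = 0 \<or> \<tau> (AuxD b))) [(d_step b, Pos (AuxD (Suc b)))]"
      using d_step_in[OF FG] step.prems(2) step.prems(3)[of "Suc b"] step.hyps by auto
  qed (use step.prems in auto)
  then show ?case
    by (rule step.IH) (use step.prems step.hyps in auto)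
qed

text \<open>If d drops from true at a to false at m and \<sigma> fixes the positions in between, the drop
  happens at m, where x_m is false and \<sigma>(x_m) true.\<close>

lemma d_chain_break:
  assumes "refuted_within G Q B" and FG: "F \<subseteq> G" and "a < m" "m \<le> n"
    and "\<And>l. a < l \<Longrightarrow> l < m \<Longrightarrow> \<sigma> (Pos (X l)) = Pos (X l)"
    and "\<And>\<tau>. P \<tau> \<Longrightarrow> (a = 0 \<or> \<tau> (AuxD a)) \<and> \<not> \<tau> (AuxD m)"
    and "\<And>\<tau>. P \<tau> \<Longrightarrow> \<not> \<tau> (X m) \<Longrightarrow> sat \<tau> (\<sigma> (Pos (X m))) \<Longrightarrow> (m = 1 \<or> \<tau> (AuxD (m - 1)))
      \<Longrightarrow> Q \<tau>"
    and "m - a + 1 + B \<le> B'"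
  shows "refuted_within G P B'"
proof -
  have m: "Suc (m - 1) = m" using \<open>a < m\<close> by simp
  have "refuted_within G (\<lambda>\<tau>. P \<tau> \<and> (m - 1 = 0 \<or> \<tau> (AuxD (m - 1)))) (Suc (Suc B))"
    by (rule refuted_within_propagates[OF assms(1),
          where cls = "[(d_step (m - 1), Neg (X m)), (d_step (m - 1), \<sigma> (Pos (X m)))]"])
      (use assms(2-) d_step_in[OF FG, of "m - 1"] in \<open>auto simp: m\<close>)
  then show ?thesis
    by (rule d_chain[OF _ FG, where a = a and b = "m - 1"]) (use assms(3-) in auto)
qed

lemma a_chain:
  assumes "refuted_within G Q B" and FG: "F \<subseteq> G" and "1 \<le> a" "a \<le> b" "b < n"
    and "\<And>\<tau>. P \<tau> \<Longrightarrow> \<tau> (AuxA b)"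
    and "\<And>\<tau>. P \<tau> \<Longrightarrow> \<tau> (AuxA a) \<Longrightarrow> Q \<tau>"
    and "b - a + B \<le> B'"
  shows "refuted_within G P B'"
  using \<open>a \<le> b\<close> assms(5-)
proof (induction b arbitrary: P B' rule: dec_induct)
  case base
  then show ?case by (intro refuted_within_mono[OF assms(1)]) auto
next
  case (step b)
  have "refuted_within G (\<lambda>\<tau>. P \<tau> \<and> \<tau> (AuxA b)) (b - a + B)"
    by (rule step.IH) (use step.prems in auto)
  then show ?case
    by (rule refuted_within_propagates[where cls = "[(a_step b, Pos (AuxA b))]"])
      (use step.prems step.hyps assms(3) a_step_in[OF FG, of b] in auto)
qed

text \<open>The RUP proofs below read their propagation trace backwards: each step prepends the
  propagations that lead to the state of the previous step, until the state without any
  assumption is reached.\<close>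

lemma rup_t_or_d_first:
  assumes "F \<subseteq> G"
  shows "\<exists>p \<le> i 1 + 5. rup G (t_or_d_clause i 1) p"
proof -
  let ?goal = "negc (t_or_d_clause i 1)"
  let ?G = "insert ?goal G"
  have FG: "F \<subseteq> ?G" using assms by blast
  have m: "1 \<le> i 1" "i 1 \<le> n" using i_bounds k_pos by auto
  have "refuted_within ?G
      (\<lambda>\<tau>. \<not> \<tau> (AuxT 1) \<and> \<not> \<tau> (AuxD (i 1)) \<and> \<tau> (X (i 1)) \<and> \<not> sat \<tau> (\<sigma> (Pos (X (i 1))))) (i 1 + 1)"
    by (rule d_chain_break[OF refuted_within_False[where B = 0] FG, where a = 0 and m = "i 1"])
      (use m \<sigma>_fixes_below in auto)
  then have "refuted_within ?G (\<lambda>_. True) (i 1 + 5)"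
    by (rule refuted_within_propagates[where cls = "[(?goal, Neg (AuxT 1)), (?goal, Neg (AuxD (i 1))),
          (t_step 0, Pos (X (i 1))), (t_step 0, neg (\<sigma> (Pos (X (i 1)))))]"])
      (use t_step_in[OF FG] k_pos in \<open>auto simp: t_or_d_clause_def\<close>)
  then show ?thesis by (rule rup_if_refuted_within) simp
qed

lemma rup_s_imp_d_first:
  assumes "F \<subseteq> G" and "1 < k"
  shows "\<exists>p \<le> i 1 + 5. rup G (s_imp_d_clause i 1) p"
proof -
  let ?goal = "negc (s_imp_d_clause i 1)"
  let ?G = "insert ?goal G"
  have FG: "F \<subseteq> ?G" using assms by blast
  have m: "1 \<le> i 1" "i 1 \<le> n" using i_bounds k_pos by auto
  have "refuted_within ?G (\<lambda>\<tau>. \<tau> (AuxS 1) \<and> \<not> \<tau> (X (i 1)) \<and> sat \<tau> (\<sigma> (Pos (X (i 1))))) 0"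
    by (rule refuted_within_conflict[OF s_step_in[OF FG, of 0]]) (use assms(2) in auto)
  then have "refuted_within ?G (\<lambda>\<tau>. \<tau> (AuxS 1) \<and> \<not> \<tau> (AuxD (i 1))) (i 1 + 1)"
    by (rule d_chain_break[OF _ FG, where a = 0 and m = "i 1"]) (use m \<sigma>_fixes_below in auto)
  then have "refuted_within ?G (\<lambda>_. True) (i 1 + 3)"
    by (rule refuted_within_propagates[where cls = "[(?goal, Pos (AuxS 1)), (?goal, Neg (AuxD (i 1)))]"])
      (auto simp: s_imp_d_clause_def)
  then show ?thesis by (rule rup_if_refuted_within) simp
qed

lemma rup_a_imp_t_first:
  assumes "F \<subseteq> G" and "1 < k"
  shows "\<exists>p \<le> i 1 + 5. rup G (a_imp_t_clause i 1) p"
proof -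
  let ?goal = "negc (a_imp_t_clause i 1)"
  let ?G = "insert ?goal G"
  have FG: "F \<subseteq> ?G" using assms by blast
  have "i 1 < i 2" "i 2 \<le> n" "1 \<le> i 1" using assms(2) i_less_iff i_bounds k_pos by auto
  then have m: "Suc (i 1 - 1) = i 1" "i 1 - 1 + 2 \<le> n" by auto
  have "refuted_within ?G
      (\<lambda>\<tau>. \<tau> (AuxA (i 1)) \<and> \<not> \<tau> (AuxT 1) \<and> \<tau> (X (i 1)) \<and> \<not> sat \<tau> (\<sigma> (Pos (X (i 1))))) 0"
    by (rule refuted_within_conflict[OF a_step_in[OF FG m(2)]]) (use m in auto)
  then have "refuted_within ?G (\<lambda>_. True) 4"
    by (rule refuted_within_propagates[where cls = "[(?goal, Pos (AuxA (i 1))), (?goal, Neg (AuxT 1)),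
          (t_step 0, Pos (X (i 1))), (t_step 0, neg (\<sigma> (Pos (X (i 1)))))]"])
      (use t_step_in[OF FG] k_pos in \<open>auto simp: a_imp_t_clause_def\<close>)
  then show ?thesis by (rule rup_if_refuted_within) simp
qed

lemma rup_t_step:
  assumes "F \<subseteq> G" and j: "1 \<le> j" "j < k" and "s_imp_d_clause i j \<in> G"
  shows "\<exists>p \<le> 2 * (i (Suc j) - i j) + 8. rup G (t_step_clause i j) p"
proof -
  let ?a = "i j" and ?m = "i (Suc j)"
  let ?goal = "negc (t_step_clause i j)"
  let ?G = "insert ?goal G"
  have FG: "F \<subseteq> ?G" using assms by blast
  note support = consecutive_support[OF j]
  have "refuted_within ?G (\<lambda>\<tau>. \<not> \<tau> (AuxT (Suc j)) \<and> \<not> \<tau> (AuxD ?m) \<and> \<tau> (AuxT j) \<and> \<tau> (AuxS j)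
      \<and> \<tau> (X ?m) \<and> \<not> sat \<tau> (\<sigma> (Pos (X ?m))) \<and> \<tau> (AuxD ?a)) (?m - ?a + 1)"
    by (rule d_chain_break[OF refuted_within_False[where B = 0] FG, where a = ?a and m = ?m])
      (use support \<sigma>_fixes_between j in auto)
  then have "refuted_within ?G (\<lambda>_. True) (?m - ?a + 8)"
    by (rule refuted_within_propagates[where cls = "[(?goal, Neg (AuxT (Suc j))), (?goal, Neg (AuxD ?m)),
          (?goal, Pos (AuxT j)), (t_step j, Pos (AuxS j)), (t_step j, Pos (X ?m)),
          (t_step j, neg (\<sigma> (Pos (X ?m)))), (s_imp_d_clause i j, Pos (AuxD ?a))]"])
      (use assms t_step_in[OF FG] in \<open>auto simp: invariant_clause_defs\<close>)
  then show ?thesis by (rule rup_if_refuted_within) simp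
qed

lemma rup_t_or_d_step:
  assumes "F \<subseteq> G" and j: "1 \<le> j" "j < k"
    and "t_step_clause i j \<in> G" "t_or_d_clause i j \<in> G" "a_imp_t_clause i j \<in> G"
  shows "\<exists>p \<le> 2 * (i (Suc j) - i j) + 8. rup G (t_or_d_clause i (Suc j)) p"
proof -
  let ?a = "i j" and ?m = "i (Suc j)"
  let ?goal = "negc (t_or_d_clause i (Suc j))"
  let ?G = "insert ?goal G"
  let ?P = "\<lambda>\<tau>. \<not> \<tau> (AuxT (Suc j)) \<and> \<not> \<tau> (AuxD ?m) \<and> \<not> \<tau> (AuxT j) \<and> \<tau> (AuxD ?a)"
  have FG: "F \<subseteq> ?G" using assms by blast
  note support = consecutive_support[OF j]
  then have m: "Suc (?m - 1) = ?m" "?m - 1 < n" "?m \<noteq> 1" by auto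
  have "refuted_within ?G (\<lambda>\<tau>. ?P \<tau> \<and> \<tau> (AuxA ?a)) 0"
    by (rule refuted_within_conflict[where c = "a_imp_t_clause i j"])
      (use assms in \<open>auto simp: a_imp_t_clause_def\<close>)
  then have "refuted_within ?G (\<lambda>\<tau>. ?P \<tau> \<and> \<tau> (AuxA (?m - 1))) (?m - ?a)"
    by (rule a_chain[OF _ FG, where a = ?a and b = "?m - 1"]) (use support in auto)
  then have "refuted_within ?G
      (\<lambda>\<tau>. ?P \<tau> \<and> \<tau> (AuxD (?m - 1)) \<and> \<not> \<tau> (X ?m) \<and> sat \<tau> (\<sigma> (Pos (X ?m)))) (?m - ?a + 1)"
    by (rule refuted_within_propagates[where cls = "[(d_step (?m - 1), Pos (AuxA (?m - 1)))]"])
      (use m d_step_in[OF FG] in auto)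
  then have "refuted_within ?G ?P (2 * (?m - ?a) + 2)"
    by (rule d_chain_break[OF _ FG, where a = ?a and m = ?m]) (use support m \<sigma>_fixes_between j in auto)
  then have "refuted_within ?G (\<lambda>_. True) (2 * (?m - ?a) + 6)"
    by (rule refuted_within_propagates[where cls = "[(?goal, Neg (AuxT (Suc j))), (?goal, Neg (AuxD ?m)),
          (t_step_clause i j, Neg (AuxT j)), (t_or_d_clause i j, Pos (AuxD ?a))]"])
      (use assms in \<open>auto simp: invariant_clause_defs\<close>)
  then show ?thesis by (rule rup_if_refuted_within) simp
qed

lemma rup_s_imp_d_step:
  assumes "F \<subseteq> G" and j: "1 \<le> j" "Suc j < k" and "s_imp_d_clause i j \<in> G"
  shows "\<exists>p \<le> 2 * (i (Suc j) - i j) + 8. rup G (s_imp_d_clause i (Suc j)) p"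
proof -
  let ?a = "i j" and ?m = "i (Suc j)"
  let ?goal = "negc (s_imp_d_clause i (Suc j))"
  let ?G = "insert ?goal G"
  let ?P = "\<lambda>\<tau>. \<tau> (AuxS (Suc j)) \<and> \<not> \<tau> (AuxD ?m) \<and> \<tau> (AuxS j) \<and> \<tau> (AuxD ?a)"
  have FG: "F \<subseteq> ?G" using assms by blast
  note support = consecutive_support[OF j(1) Suc_lessD[OF j(2)]]
  have "refuted_within ?G (\<lambda>\<tau>. ?P \<tau> \<and> \<not> \<tau> (X ?m) \<and> sat \<tau> (\<sigma> (Pos (X ?m)))) 0"
    by (rule refuted_within_conflict[OF s_step_in[OF FG, of j]]) (use j in auto)
  then have "refuted_within ?G ?P (?m - ?a + 1)"
    by (rule d_chain_break[OF _ FG, where a = ?a and m = ?m]) (use support \<sigma>_fixes_between j in auto)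
  then have "refuted_within ?G (\<lambda>_. True) (?m - ?a + 5)"
    by (rule refuted_within_propagates[where cls = "[(?goal, Pos (AuxS (Suc j))), (?goal, Neg (AuxD ?m)),
          (s_step j, Pos (AuxS j)), (s_imp_d_clause i j, Pos (AuxD ?a))]"])
      (use assms s_step_in[OF FG] in \<open>auto simp: invariant_clause_defs\<close>)
  then show ?thesis by (rule rup_if_refuted_within) simp
qed

lemma rup_a_imp_t_step:
  assumes "F \<subseteq> G" and j: "1 \<le> j" "Suc j < k" and "a_imp_t_clause i j \<in> G"
  shows "\<exists>p \<le> 2 * (i (Suc j) - i j) + 8. rup G (a_imp_t_clause i (Suc j)) p"
proof -
  let ?a = "i j" and ?m = "i (Suc j)"
  let ?goal = "negc (a_imp_t_clause i (Suc j))"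
  let ?G = "insert ?goal G"
  let ?P = "\<lambda>\<tau>. \<tau> (AuxA ?m) \<and> \<not> \<tau> (AuxT (Suc j))"
  have FG: "F \<subseteq> ?G" using assms by blast
  note support = consecutive_support[OF j(1) Suc_lessD[OF j(2)]]
  have "?m < i (Suc (Suc j))" "i (Suc (Suc j)) \<le> n"
    using consecutive_support[of "Suc j"] j by auto
  with support have m: "Suc (?m - 1) = ?m" "?m - 1 + 2 \<le> n" "?m < n" by auto
  have "refuted_within ?G (\<lambda>\<tau>. ?P \<tau> \<and> \<tau> (AuxT j) \<and> \<tau> (X ?m) \<and> \<not> sat \<tau> (\<sigma> (Pos (X ?m)))) 0"
    by (rule refuted_within_conflict[OF a_step_in[OF FG m(2)]]) (use m in auto)
  then have "refuted_within ?G (\<lambda>\<tau>. ?P \<tau> \<and> \<tau> (AuxA ?a)) 3"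
    by (rule refuted_within_propagates[where cls = "[(a_imp_t_clause i j, Pos (AuxT j)),
          (t_step j, Pos (X ?m)), (t_step j, neg (\<sigma> (Pos (X ?m))))]"])
      (use assms j t_step_in[OF FG] in \<open>auto simp: a_imp_t_clause_def\<close>)
  then have "refuted_within ?G ?P (?m - ?a + 3)"
    by (rule a_chain[OF _ FG, where a = ?a and b = ?m]) (use support m in auto)
  then have "refuted_within ?G (\<lambda>_. True) (?m - ?a + 5)"
    by (rule refuted_within_propagates[where cls = "[(?goal, Pos (AuxA ?m)), (?goal, Neg (AuxT (Suc j)))]"])
      (auto simp: a_imp_t_clause_def)
  then show ?thesis by (rule rup_if_refuted_within) simp
qed

lemma rup_falsum:
  assumes "F \<subseteq> G" and "clause [Neg (AuxT k)] \<in> G" "clause [Neg (AuxD n)] \<in> G"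
    and "t_or_d_clause i k \<in> G"
  shows "\<exists>p \<le> n + 2. rup G falsum p"
proof -
  let ?G = "insert (negc falsum) G"
  have FG: "F \<subseteq> ?G" using assms by blast
  have support: "1 \<le> i k" "i k \<le> n" using i_bounds k_pos by auto
  have "refuted_within ?G (\<lambda>\<tau>. \<tau> (AuxD n)) 0"
    by (rule refuted_within_conflict[where c = "clause [Neg (AuxD n)]"]) (use assms in auto)
  then have "refuted_within ?G (\<lambda>\<tau>. \<not> \<tau> (AuxT k) \<and> \<tau> (AuxD (i k))) (n - i k)"
    by (rule d_chain[OF _ FG, where a = "i k" and b = n]) (use support \<sigma>_fixes_above in auto)
  then have "refuted_within ?G (\<lambda>_. True) (n - i k + 2)"
    by (rule refuted_within_propagates[where cls = "[(clause [Neg (AuxT k)], Neg (AuxT k)),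
          (t_or_d_clause i k, Pos (AuxD (i k)))]"])
      (use assms in \<open>auto simp: t_or_d_clause_def\<close>)
  then show ?thesis by (rule rup_if_refuted_within) simp
qed

definition derives_invariants :: "nat \<Rightarrow> var pstep list \<Rightarrow> bool" where
  "derives_invariants j st \<longleftrightarrow> valid_from F st
     \<and> sum_list (map step_cost st) \<le> 4 * j \<and> sum_list (map step_props st) \<le> 32 * j + 8 * i j
     \<and> t_or_d_clause i j \<in> derived F st
     \<and> (j < k \<longrightarrow> s_imp_d_clause i j \<in> derived F st \<and> a_imp_t_clause i j \<in> derived F st)"

lemma derives_invariants_first: "\<exists>st. derives_invariants 1 st"
proof -
  obtain p1 where p1: "p1 \<le> i 1 + 5" "rup F (t_or_d_clause i 1) p1"
    using rup_t_or_d_first by blast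
  let ?F1 = "insert (t_or_d_clause i 1) F"
  show ?thesis
  proof (cases "1 < k")
    case True
    obtain p2 where p2: "p2 \<le> i 1 + 5" "rup ?F1 (s_imp_d_clause i 1) p2"
      using rup_s_imp_d_first[of ?F1] True by blast
    obtain p3 where p3: "p3 \<le> i 1 + 5" "rup (insert (s_imp_d_clause i 1) ?F1) (a_imp_t_clause i 1) p3"
      using rup_a_imp_t_first[of "insert (s_imp_d_clause i 1) ?F1"] True by blast
    show ?thesis
      by (rule exI[of _ "[RUPStep (t_or_d_clause i 1) p1, RUPStep (s_imp_d_clause i 1) p2,
            RUPStep (a_imp_t_clause i 1) p3]"])
        (use p1 p2 p3 in \<open>auto simp: derives_invariants_def derived_def\<close>)
  next
    case False
    then show ?thesis
      by (intro exI[of _ "[RUPStep (t_or_d_clause i 1) p1]"])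
        (use p1 in \<open>auto simp: derives_invariants_def derived_def\<close>)
  qed
qed

lemma derives_invariants_Suc:
  assumes "derives_invariants j st" and j: "1 \<le> j" "j < k"
  shows "\<exists>st'. derives_invariants (Suc j) st'"
proof -
  let ?S = "derived F st"
  have FS: "F \<subseteq> ?S" by (simp add: derived_def)
  note st = assms(1)[unfolded derives_invariants_def]
  obtain pH where pH: "pH \<le> 2 * (i (Suc j) - i j) + 8" "rup ?S (t_step_clause i j) pH"
    using rup_t_step[OF FS j] st j by blast
  obtain p1 where p1: "p1 \<le> 2 * (i (Suc j) - i j) + 8"
      "rup (insert (t_step_clause i j) ?S) (t_or_d_clause i (Suc j)) p1"
    using rup_t_or_d_step[of "insert (t_step_clause i j) ?S", OF _ j] FS st j by blast
  let ?st1 = "st @ [RUPStep (t_step_clause i j) pH, RUPStep (t_or_d_clause i (Suc j)) p1]"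
  let ?S1 = "derived F ?st1"
  have "i j < i (Suc j)" using consecutive_support[OF j] by simp
  then have st1: "valid_from F ?st1" "sum_list (map step_cost ?st1) + 2 \<le> 4 * Suc j"
      "sum_list (map step_props ?st1) + 2 * (2 * (i (Suc j) - i j) + 8) \<le> 32 * Suc j + 8 * i (Suc j)"
      "?S1 = insert (t_or_d_clause i (Suc j)) (insert (t_step_clause i j) ?S)"
    using st pH p1 by (auto simp: valid_from_append derived_def)
  show ?thesis
  proof (cases "Suc j < k")
    case True
    have FS1: "F \<subseteq> ?S1" by (auto simp: derived_def)
    obtain p2 where p2: "p2 \<le> 2 * (i (Suc j) - i j) + 8" "rup ?S1 (s_imp_d_clause i (Suc j)) p2"
      using rup_s_imp_d_step[OF FS1 j(1) True] st st1(4) j(2) by auto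
    obtain p3 where p3: "p3 \<le> 2 * (i (Suc j) - i j) + 8"
        "rup (insert (s_imp_d_clause i (Suc j)) ?S1) (a_imp_t_clause i (Suc j)) p3"
      using rup_a_imp_t_step[OF subset_insertI2[OF FS1, of "s_imp_d_clause i (Suc j)"] j(1) True]
        st st1(4) j(2) by auto
    show ?thesis
      by (rule exI[of _ "?st1 @ [RUPStep (s_imp_d_clause i (Suc j)) p2,
            RUPStep (a_imp_t_clause i (Suc j)) p3]"])
        (use st1 p2 p3 in \<open>auto simp: derives_invariants_def valid_from_append derived_def\<close>)
  next
    case False
    then show ?thesis
      by (intro exI[of _ ?st1]) (use st1 in \<open>auto simp: derives_invariants_def derived_def\<close>)
  qed
qed

lemma derives_invariants: "1 \<le> j \<Longrightarrow> j \<le> k \<Longrightarrow> \<exists>st. derives_invariants j st"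
proof (induction j rule: nat_induct_at_least)
  case (Suc j)
  then show ?case using derives_invariants_Suc by auto
qed (use derives_invariants_first in auto)

lemma refutation:
  assumes "clause [Neg (AuxT k)] \<in> F" "clause [Neg (AuxD n)] \<in> F"
  shows "\<exists>st. refutes F st \<and> sum_list (map step_cost st) \<le> 5 * k
    \<and> sum_list (map step_props st) \<le> 43 * n"
proof -
  obtain st where st: "valid_from F st" "sum_list (map step_cost st) \<le> 4 * k"
      "sum_list (map step_props st) \<le> 32 * k + 8 * i k" "t_or_d_clause i k \<in> derived F st"
    using derives_invariants[OF k_pos order_refl] by (auto simp: derives_invariants_def)
  obtain p where p: "p \<le> n + 2" "rup (derived F st) falsum p"
    using rup_falsum[of "derived F st"] st(4) assms by (auto simp: derived_def)
  have "i k \<le> n" "k \<le> n" "1 \<le> k" using i_bounds k_pos k_le_n by auto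
  then show ?thesis
    by (intro exI[of _ "st @ [RUPStep falsum p]"]) (use st p in \<open>auto simp: refutes_def valid_from_append\<close>)
qed

end

lemma lexspec_circuit_refutation:
  assumes "1 \<le> k" "strict_mono_on {1..k} i" "i ` {1..k} \<subseteq> {1..n}" "supp \<sigma> = X ` i ` {1..k}"
    and "circuit k (\<lambda>j. Pos (X (i j))) (\<lambda>j. \<sigma> (Pos (X (i j)))) AuxS AuxT \<subseteq> D"
  shows "\<exists>st. refutes (C \<union> D \<union> {pb [(1, Neg (AuxT k))] 1}
                \<union> lexspec n (\<lambda>j. \<sigma> (Pos (X j))) (\<lambda>j. Pos (X j)) AuxA AuxD
                \<union> {pb [(1, Neg (AuxD n))] 1}) st
           \<and> sum_list (map step_cost st) \<le> 5 * k
           \<and> sum_list (map step_props st) \<le> 43 * n"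
proof -
  let ?F = "C \<union> D \<union> {pb [(1, Neg (AuxT k))] 1}
    \<union> lexspec n (\<lambda>j. \<sigma> (Pos (X j))) (\<lambda>j. Pos (X j)) AuxA AuxD \<union> {pb [(1, Neg (AuxD n))] 1}"
  interpret lex_circuit n k i \<sigma> ?F
  proof
    show "\<sigma> (Pos (X l)) = Pos (X l)" if "l \<notin> i ` {1..k}" for l
      using that assms(4) by (auto simp: supp_def)
  qed (use assms in auto)
  have "pb [(1, l)] 1 = clause [l]" for l :: "var lit"
    by (simp add: clause_def)
  then show ?thesis
    using refutation by simp
qed

theorem lemma15:
  "\<exists>K1 K2 :: nat. \<forall>(n::nat) (k::nat) (i::nat \<Rightarrow> nat) (\<sigma>::var lit \<Rightarrow> var lit)
       (C::var constr set) (D::var constr set).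
     n \<ge> 1 \<and> k \<ge> 1 \<and> strict_mono_on {1..k} i \<and> i ` {1..k} \<subseteq> {1..n}
     \<and> finite C \<and> (\<forall>c\<in>C. wf_constr c) \<and> finite D \<and> (\<forall>c\<in>D. wf_constr c)
     \<and> is_symmetry \<sigma> C \<and> supp \<sigma> = X ` i ` {1..k}
     \<and> (\<forall>c\<in>C. vars c \<subseteq> range X \<union> range Other)
     \<and> (\<forall>c\<in>D. vars c \<inter> (range AuxA \<union> range AuxD) = {})
     \<and> circuit k (\<lambda>j. Pos (X (i j))) (\<lambda>j. \<sigma> (Pos (X (i j)))) AuxS AuxT \<subseteq> D
     \<longrightarrow> (\<exists>st :: var pstep list.
            refutes (C \<union> D \<union> {pb [(1, Neg (AuxT k))] 1}
                     \<union> lexspec n (\<lambda>j. \<sigma> (Pos (X j))) (\<lambda>j. Pos (X j)) AuxA AuxD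
                     \<union> {pb [(1, Neg (AuxD n))] 1}) st
            \<and> sum_list (map step_cost st) \<le> K1 * k
            \<and> sum_list (map step_props st) \<le> K2 * n)"
  by (intro exI[of _ "5::nat"] exI[of _ "43::nat"] allI impI, elim conjE)
    (rule lexspec_circuit_refutation)

end
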